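(* For the iterates of the ROSS algorithm described in the context, with momentum coefficient $\alpha\in[0,1)$, define $\bar S^{[0]}=\bar x^{[0]}$ and $\bar S^{[t]}=\frac{1}{1-\alpha}\bar x^{[t]}-\frac{\alpha}{1-\alpha}\bar x^{[t-1]}$ for $t\ge1$. Then for every $T\ge1$, $$\sum_{t=1}^T\left\|\bar S^{[t]}-\bar x^{[t]}\right\|^2\le\frac{\gamma^2\alpha^2}{(1-\alpha)^4}\sum_{t=1}^T\left\|\frac1N\sum_{i=1}^N\bar g^{[t]}_i\right\|^2.$$
   Context: Setting: $N\ge1$ agents $\mathcal{N}=\{1,\dots,N\}$. $\mathbf{W}=(\omega_{i,j})\in[0,1]^{N\times N}$ is a symmetric doubly stochastic matrix ($\omega_{i,j}=\omega_{j,i}$, $\sum_{j}\omega_{i,j}=1$). $\mathcal{N}_i=\{j\in\mathcal{N}:\omega_{i,j}>0\}$ is the neighborhood of agent $i$ (the algorithm treats $i$ itself as a member of $\mathcal{N}_i$). Agent $i$ has a data distribution $\mathcal{D}_i$; $F(x;\xi)$ is a real-valued loss, differentiable in $x\in\mathbb{R}^d$. A finite validation set $\mathcal{Q}$ is available to every agent, and $J(\xi;x)$ denotes the accuracy of model $x$ on sample $\xi$. Algorithm ROSS (learning rate $\gamma>0$, momentum coefficient $\alpha$): all agents start from a common point $x_i^{[0]}=x^{[0]}$ with $u_i^{[0]}=0$. In each round $t=1,2,\dots$, each agent $i$ draws a sample $\xi_{i,t}\sim\mathcal{D}_i$ and for each $j\in\mathcal{N}_i$ computes $g^{[t]}_{i,j}=\nabla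 F(x^{[t-1]}_j;\xi_{i,t})$. Agent $i$ then sets $x^{[t]}_{i,j}=x^{[t-1]}_i-\gamma g^{[t]}_{j,i}$ for $j\in\mathcal{N}_i$; for $\mathcal{N}'\subseteq\mathcal{N}_i$ it defines $v(\mathcal{N}')=\frac{1}{|\mathcal{Q}|}\sum_{\xi\in\mathcal{Q}}J\big(\xi;\frac{1}{|\mathcal{N}'|}\sum_{j\in\mathcal{N}'}x^{[t]}_{i,j}\big)$ ($v(\emptyset)=0$); Shapley values $\varphi^{[t]}_{i,j}=\sum_{\mathcal{N}'\subseteq\mathcal{N}_i\setminus\{j\}}\frac{v(\mathcal{N}'\cup\{j\})-v(\mathcal{N}')}{|\mathcal{N}_i|\binom{|\mathcal{N}_i|-1}{|\mathcal{N}'|}}$; normalized values $\hat\varphi^{[t]}_{i,j}=\frac{\varphi^{[t]}_{i,j}-\min_{k\in\mathcal{N}_i}\varphi^{[t]}_{i,k}}{\max_{k\in\mathcal{N}_i}\varphi^{[t]}_{i,k}-\min_{k\in\mathcal{N}_i}\varphi^{[t]}_{i,k}}$; weights $\pi^{[t]}_{i,j}=\frac{\hat\varphi^{[t]}_{i,j}}{\omega_{i,j}\sum_{k\in\mathcal{N}_i}\hat\varphi^{[t]}_{i,k}}$; then $\bar g^{[t]}_i=\sum_{j\in\mathcal{N}_i}\pi^{[t]}_{i,j}g^{[t]}_{j,i}$, $\hat u^{[t]}_i=\alpha u^{[t-1]}_i+\bar g^{[t]}_i$, $\hat x^{[t]}_i=x^{[t-1]}_i-\gamma\hat u^{[t]}_i$,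 $u^{[t]}_i=\sum_{j\in\mathcal{N}_i}\omega_{i,j}\hat u^{[t]}_j$, $x^{[t]}_i=\sum_{j\in\mathcal{N}_i}\omega_{i,j}\hat x^{[t]}_j$. Write $\bar x^{[t]}=\frac1N\sum_{i=1}^N x^{[t]}_i$. *)

theory Defs
  imports "HOL-Analysis.Analysis"
begin

definition nbhd :: "('a \<Rightarrow> 'a \<Rightarrow> real) \<Rightarrow> 'a \<Rightarrow> 'a set" where
  "nbhd W i = {j. W i j > 0} \<union> {i}"

text \<open>Coalition value v(S): mean validation accuracy of the average of the models y j, j in S.\<close>
definition coal_val :: "'xi set \<Rightarrow> ('xi \<Rightarrow> 'v::real_vector \<Rightarrow> real) \<Rightarrow> ('a \<Rightarrow> 'v) \<Rightarrow> 'a set \<Rightarrow> real" where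
  "coal_val Q J y S = (if S = {} then 0 else
      (1 / real (card Q)) * (\<Sum>\<xi>\<in>Q. J \<xi> ((1 / real (card S)) *\<^sub>R (\<Sum>j\<in>S. y j))))"

definition shapley :: "('a set \<Rightarrow> real) \<Rightarrow> 'a set \<Rightarrow> 'a \<Rightarrow> real" where
  "shapley v M j = (\<Sum>S\<in>Pow (M - {j}).
      (v (insert j S) - v S) / (real (card M) * real ((card M - 1) choose (card S))))"

definition norm_shapley :: "('a \<Rightarrow> real) \<Rightarrow> 'a set \<Rightarrow> 'a \<Rightarrow> real" where
  "norm_shapley phi M j = (phi j - Min (phi ` M)) / (Max (phi ` M) - Min (phi ` M))"

text \<open>Local gradients at round t, given the iterates x of round t-1:
  ross_g gradF \<xi> t x i j = g^[t]_{i,j} = grad F(x_j; \<xi>_{i,t}).\<close>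
definition ross_g :: "('v \<Rightarrow> 'xi \<Rightarrow> 'v) \<Rightarrow> ('a \<Rightarrow> nat \<Rightarrow> 'xi) \<Rightarrow> nat \<Rightarrow> ('a \<Rightarrow> 'v) \<Rightarrow> 'a \<Rightarrow> 'a \<Rightarrow> 'v" where
  "ross_g gradF \<xi> t x i j = gradF (x j) (\<xi> i t)"

text \<open>Aggregated gradient \<open>gbar^[t]_i\<close> of agent i at round t, given the iterates x of round t-1.\<close>
definition ross_gbar ::
  "('a \<Rightarrow> 'a \<Rightarrow> real) \<Rightarrow> 'xi set \<Rightarrow> ('xi \<Rightarrow> 'v::real_vector \<Rightarrow> real) \<Rightarrow> ('v \<Rightarrow> 'xi \<Rightarrow> 'v)
    \<Rightarrow> real \<Rightarrow> ('a \<Rightarrow> nat \<Rightarrow> 'xi) \<Rightarrow> nat \<Rightarrow> ('a \<Rightarrow> 'v) \<Rightarrow> 'a \<Rightarrow> 'v" where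
  "ross_gbar W Q J gradF \<gamma> \<xi> t x i =
     (let g = ross_g gradF \<xi> t x;
          xloc = (\<lambda>j. x i - \<gamma> *\<^sub>R g j i);
          M = nbhd W i;
          phi = shapley (coal_val Q J xloc) M;
          phihat = norm_shapley phi M;
          pi = (\<lambda>j. phihat j / (W i j * (\<Sum>k\<in>M. phihat k)))
      in \<Sum>j\<in>M. pi j *\<^sub>R g j i)"

definition ross_step ::
  "('a \<Rightarrow> 'a \<Rightarrow> real) \<Rightarrow> 'xi set \<Rightarrow> ('xi \<Rightarrow> 'v::real_vector \<Rightarrow> real) \<Rightarrow> ('v \<Rightarrow> 'xi \<Rightarrow> 'v)
    \<Rightarrow> real \<Rightarrow> real \<Rightarrow> ('a \<Rightarrow> nat \<Rightarrow> 'xi) \<Rightarrow> nat \<Rightarrow> ('a \<Rightarrow> 'v) \<times> ('a \<Rightarrow> 'v) \<Rightarrow> ('a \<Rightarrow> 'v) \<times> ('a \<Rightarrow> 'v)" where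
  "ross_step W Q J gradF \<gamma> \<alpha> \<xi> t st =
     (let x = fst st; u = snd st;
          uhat = (\<lambda>i. \<alpha> *\<^sub>R u i + ross_gbar W Q J gradF \<gamma> \<xi> t x i);
          xhat = (\<lambda>i. x i - \<gamma> *\<^sub>R uhat i)
      in ((\<lambda>i. \<Sum>j\<in>nbhd W i. W i j *\<^sub>R xhat j),
          (\<lambda>i. \<Sum>j\<in>nbhd W i. W i j *\<^sub>R uhat j)))"

fun ross ::
  "('a \<Rightarrow> 'a \<Rightarrow> real) \<Rightarrow> 'xi set \<Rightarrow> ('xi \<Rightarrow> 'v::real_vector \<Rightarrow> real) \<Rightarrow> ('v \<Rightarrow> 'xi \<Rightarrow> 'v)
    \<Rightarrow> real \<Rightarrow> real \<Rightarrow> ('a \<Rightarrow> nat \<Rightarrow> 'xi) \<Rightarrow> 'v \<Rightarrow> nat \<Rightarrow> ('a \<Rightarrow> 'v) \<times> ('a \<Rightarrow> 'v)" where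
  "ross W Q J gradF \<gamma> \<alpha> \<xi> x0 0 = ((\<lambda>i. x0), (\<lambda>i. 0))"
| "ross W Q J gradF \<gamma> \<alpha> \<xi> x0 (Suc t) =
     ross_step W Q J gradF \<gamma> \<alpha> \<xi> (Suc t) (ross W Q J gradF \<gamma> \<alpha> \<xi> x0 t)"

end

theory Submission
  imports Defs
begin

text \<open>Since \<open>W\<close> is nonnegative with unit column sums, mixing preserves network averages,
  so the average momentum \<open>U t\<close> and the average model \<open>xbar t\<close> follow the centralised
  heavy-ball recursion \<open>U t = \<alpha> U (t-1) + ggbar t\<close>, \<open>U 0 = 0\<close>, \<open>xbar t = xbar (t-1) - \<gamma> U t\<close>;
  none of the other hypotheses on \<open>W\<close>, \<open>F\<close> or the Shapley weights matter. Hence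
  \<open>Sbar t - xbar t = -\<gamma>\<alpha>/(1-\<alpha>) U t\<close>. Viewing \<open>\<alpha> U + g\<close> as a convex combination of \<open>U\<close>
  and \<open>g/(1-\<alpha>)\<close> gives \<open>\<parallel>U t\<parallel>\<^sup>2 \<le> \<alpha> \<parallel>U (t-1)\<parallel>\<^sup>2 + \<parallel>ggbar t\<parallel>\<^sup>2/(1-\<alpha>)\<close>, and summing
  this contracting recursion bounds \<open>\<Sum> \<parallel>U t\<parallel>\<^sup>2\<close> by \<open>\<Sum> \<parallel>ggbar t\<parallel>\<^sup>2/(1-\<alpha>)\<^sup>2\<close>.\<close>

definition agent_mean :: "('a::finite \<Rightarrow> 'v::real_vector) \<Rightarrow> 'v" where
  "agent_mean y = (1 / real CARD('a)) *\<^sub>R (\<Sum>i\<in>UNIV. y i)"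

lemma agent_mean_add: "agent_mean (\<lambda>i. y i + z i) = agent_mean y + agent_mean z"
  by (simp add: agent_mean_def sum.distrib scaleR_right_distrib)

lemma agent_mean_diff: "agent_mean (\<lambda>i. y i - z i) = agent_mean y - agent_mean z"
  by (simp add: agent_mean_def sum_subtractf scaleR_diff_right)

lemma agent_mean_scaleR: "agent_mean (\<lambda>i. c *\<^sub>R y i) = c *\<^sub>R agent_mean y"
  by (simp add: agent_mean_def scaleR_sum_right[symmetric])

lemma sum_nbhd_mixing_eq:
  fixes W :: "'a::finite \<Rightarrow> 'a \<Rightarrow> real" and h :: "'a \<Rightarrow> 'v::real_vector"
  assumes W_nonneg: "\<And>i j. 0 \<le> W i j"
    and W_cols: "\<And>j. (\<Sum>i\<in>UNIV. W i j) = 1"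
  shows "(\<Sum>i\<in>UNIV. \<Sum>j\<in>nbhd W i. W i j *\<^sub>R h j) = (\<Sum>j\<in>UNIV. h j)"
proof -
  have outside_nbhd: "W i j = 0" if "j \<notin> nbhd W i" for i j
    using that W_nonneg[of i j] by (simp add: nbhd_def)
  have nbhd_sum: "(\<Sum>j\<in>nbhd W i. W i j *\<^sub>R h j) = (\<Sum>j\<in>UNIV. W i j *\<^sub>R h j)" for i
    by (rule sum.mono_neutral_left) (simp_all add: outside_nbhd)
  have "(\<Sum>i\<in>UNIV. \<Sum>j\<in>nbhd W i. W i j *\<^sub>R h j) = (\<Sum>j\<in>UNIV. \<Sum>i\<in>UNIV. W i j *\<^sub>R h j)"
    unfolding nbhd_sum by (rule sum.swap)
  also have "\<dots> = (\<Sum>j\<in>UNIV. (\<Sum>i\<in>UNIV. W i j) *\<^sub>R h j)"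
    by (simp add: scaleR_sum_left)
  finally show ?thesis by (simp add: W_cols)
qed

lemma agent_mean_nbhd_mixing:
  fixes W :: "'a::finite \<Rightarrow> 'a \<Rightarrow> real"
  assumes "\<And>i j. 0 \<le> W i j" and "\<And>j. (\<Sum>i\<in>UNIV. W i j) = 1"
  shows "agent_mean (\<lambda>i. \<Sum>j\<in>nbhd W i. W i j *\<^sub>R h j) = agent_mean h"
  by (simp add: agent_mean_def sum_nbhd_mixing_eq[OF assms])

lemma ross_agent_mean_step:
  fixes W :: "'a::finite \<Rightarrow> 'a \<Rightarrow> real"
  assumes W_nonneg: "\<And>i j. 0 \<le> W i j" and W_cols: "\<And>j. (\<Sum>i\<in>UNIV. W i j) = 1"
  shows "agent_mean (snd (ross W Q J gradF \<gamma> \<alpha> \<xi> x0 (Suc t)))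
           = \<alpha> *\<^sub>R agent_mean (snd (ross W Q J gradF \<gamma> \<alpha> \<xi> x0 t))
             + agent_mean (ross_gbar W Q J gradF \<gamma> \<xi> (Suc t) (fst (ross W Q J gradF \<gamma> \<alpha> \<xi> x0 t)))"
    and "agent_mean (fst (ross W Q J gradF \<gamma> \<alpha> \<xi> x0 (Suc t)))
           = agent_mean (fst (ross W Q J gradF \<gamma> \<alpha> \<xi> x0 t))
             - \<gamma> *\<^sub>R agent_mean (snd (ross W Q J gradF \<gamma> \<alpha> \<xi> x0 (Suc t)))"
  using W_nonneg W_cols
  by (simp_all add: ross_step_def Let_def agent_mean_nbhd_mixing agent_mean_add agent_mean_diff
      agent_mean_scaleR)

lemma power2_norm_scaleR_add_le:
  fixes a b :: "'v::real_normed_vector"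
  assumes "0 \<le> \<alpha>" "\<alpha> < 1"
  shows "(norm (\<alpha> *\<^sub>R a + b))\<^sup>2 \<le> \<alpha> * (norm a)\<^sup>2 + (norm b)\<^sup>2 / (1 - \<alpha>)"
proof -
  let ?x = "norm a" and ?y = "norm b"
  have "norm (\<alpha> *\<^sub>R a + b) \<le> \<alpha> * ?x + ?y"
    using norm_triangle_ineq[of "\<alpha> *\<^sub>R a" b] assms by simp
  then have "(norm (\<alpha> *\<^sub>R a + b))\<^sup>2 \<le> (\<alpha> * ?x + ?y)\<^sup>2"
    by (simp add: power_mono)
  moreover have "\<alpha> * ?x\<^sup>2 + ?y\<^sup>2 / (1 - \<alpha>) - (\<alpha> * ?x + ?y)\<^sup>2 = \<alpha> / (1 - \<alpha>) * ((1 - \<alpha>) * ?x - ?y)\<^sup>2"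
    using assms by (simp add: field_simps power2_eq_square)
  moreover have "0 \<le> \<alpha> / (1 - \<alpha>) * ((1 - \<alpha>) * ?x - ?y)\<^sup>2"
    using assms by simp
  ultimately show ?thesis by linarith
qed

lemma sum_le_of_contracting_recurrence:
  fixes a b :: "nat \<Rightarrow> real"
  assumes "0 \<le> \<alpha>" "\<alpha> < 1"
    and a_nonneg: "\<And>t. 0 \<le> a t" and a0: "a 0 = 0"
    and step: "\<And>t. a (Suc t) \<le> \<alpha> * a t + b (Suc t)"
  shows "(\<Sum>t=1..T. a t) \<le> (\<Sum>t=1..T. b t) / (1 - \<alpha>)"
proof -
  let ?A = "\<Sum>t=1..T. a t" and ?B = "\<Sum>t=1..T. b t"
  have shifted: "(\<Sum>t<T. a t) \<le> ?A"
  proof -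
    have "(\<Sum>t<T. a t) \<le> (\<Sum>t<Suc T. a t)"
      using a_nonneg by simp
    also have "\<dots> = ?A"
      by (subst sum.lessThan_Suc_shift) (simp add: a0 sum.atLeast1_atMost_eq)
    finally show ?thesis .
  qed
  have "?A = (\<Sum>t<T. a (Suc t))"
    by (simp add: sum.atLeast1_atMost_eq)
  also have "\<dots> \<le> (\<Sum>t<T. \<alpha> * a t + b (Suc t))"
    by (rule sum_mono) (rule step)
  also have "\<dots> = \<alpha> * (\<Sum>t<T. a t) + ?B"
    by (simp add: sum.distrib sum_distrib_left sum.atLeast1_atMost_eq)
  also have "\<dots> \<le> \<alpha> * ?A + ?B"
    using shifted assms(1) by (simp add: mult_left_mono)
  finally have "(1 - \<alpha>) * ?A \<le> ?B"
    by (simp add: algebra_simps)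
  with assms(2) show ?thesis
    by (simp add: pos_le_divide_eq mult.commute)
qed

lemma sum_power2_norm_heavy_ball_le:
  fixes u g :: "nat \<Rightarrow> 'v::real_normed_vector"
  assumes "0 \<le> \<alpha>" "\<alpha> < 1"
    and u0: "u 0 = 0" and u_step: "\<And>t. u (Suc t) = \<alpha> *\<^sub>R u t + g (Suc t)"
  shows "(\<Sum>t=1..T. (norm (u t))\<^sup>2) \<le> (\<Sum>t=1..T. (norm (g t))\<^sup>2) / (1 - \<alpha>)\<^sup>2"
proof -
  have "(\<Sum>t=1..T. (norm (u t))\<^sup>2) \<le> (\<Sum>t=1..T. (norm (g t))\<^sup>2 / (1 - \<alpha>)) / (1 - \<alpha>)"
    using assms(1,2) u0 power2_norm_scaleR_add_le[OF assms(1,2)]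
    by (intro sum_le_of_contracting_recurrence) (simp_all add: u_step)
  then show ?thesis
    by (simp add: sum_divide_distrib[symmetric] power2_eq_square)
qed

lemma heavy_ball_extrapolation_gap:
  fixes x u :: "'v::real_vector"
  assumes "\<alpha> \<noteq> 1"
  shows "(1 / (1 - \<alpha>)) *\<^sub>R (x - \<gamma> *\<^sub>R u) - (\<alpha> / (1 - \<alpha>)) *\<^sub>R x - (x - \<gamma> *\<^sub>R u)
           = - (\<gamma> * \<alpha> / (1 - \<alpha>)) *\<^sub>R u"
proof -
  have "1 / (1 - \<alpha>) = 1 + \<alpha> / (1 - \<alpha>)"
    using assms by (simp add: field_simps)
  then show ?thesis
    by (simp add: algebra_simps)
qed

theorem lemma3:
  fixes W :: "'a::finite \<Rightarrow> 'a \<Rightarrow> real"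
    and F :: "'v::euclidean_space \<Rightarrow> 'xi \<Rightarrow> real"
    and gradF :: "'v \<Rightarrow> 'xi \<Rightarrow> 'v"
    and Q :: "'xi set" and J :: "'xi \<Rightarrow> 'v \<Rightarrow> real"
    and \<gamma> \<alpha> :: real and \<xi> :: "'a \<Rightarrow> nat \<Rightarrow> 'xi" and x0 :: 'v and T :: nat
    and xbar Sbar :: "nat \<Rightarrow> 'v" and ggbar :: "nat \<Rightarrow> 'v"
  assumes W_range: "\<And>i j. 0 \<le> W i j \<and> W i j \<le> 1"
    and W_sym: "\<And>i j. W i j = W j i"
    and W_rows: "\<And>i. (\<Sum>j\<in>UNIV. W i j) = 1"
    and W_cols: "\<And>j. (\<Sum>i\<in>UNIV. W i j) = 1"
    and grad: "\<And>x \<zeta>. ((\<lambda>y. F y \<zeta>) has_derivative (\<lambda>h. gradF x \<zeta> \<bullet> h)) (at x)"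
    and Q_fin: "finite Q"
    and gamma_pos: "\<gamma> > 0"
    and alpha: "0 \<le> \<alpha>" "\<alpha> < 1"
    and T: "T \<ge> 1"
    and xbar_def: "\<And>t. xbar t = (1 / real CARD('a)) *\<^sub>R
                      (\<Sum>i\<in>UNIV. fst (ross W Q J gradF \<gamma> \<alpha> \<xi> x0 t) i)"
    and Sbar_def: "\<And>t. Sbar t = (if t = 0 then xbar 0
                      else (1 / (1 - \<alpha>)) *\<^sub>R xbar t - (\<alpha> / (1 - \<alpha>)) *\<^sub>R xbar (t - 1))"
    and ggbar_def: "\<And>t. ggbar t = (1 / real CARD('a)) *\<^sub>R
                      (\<Sum>i\<in>UNIV. ross_gbar W Q J gradF \<gamma> \<xi> t
                                   (fst (ross W Q J gradF \<gamma> \<alpha> \<xi> x0 (t - 1))) i)"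
  shows "(\<Sum>t=1..T. (norm (Sbar t - xbar t))\<^sup>2)
           \<le> \<gamma>\<^sup>2 * \<alpha>\<^sup>2 / (1 - \<alpha>)^4 * (\<Sum>t=1..T. (norm (ggbar t))\<^sup>2)"
proof -
  define U where "U t = agent_mean (snd (ross W Q J gradF \<gamma> \<alpha> \<xi> x0 t))" for t
  have W_nonneg: "\<And>i j. 0 \<le> W i j"
    using W_range by simp
  note mean_step = ross_agent_mean_step[where W = W, OF W_nonneg W_cols]
  have xbar_step: "xbar (Suc t) = xbar t - \<gamma> *\<^sub>R U (Suc t)" for t
    by (simp only: xbar_def U_def agent_mean_def[symmetric] mean_step(2))
  have U_step: "U (Suc t) = \<alpha> *\<^sub>R U t + ggbar (Suc t)" for t
    by (simp only: U_def ggbar_def agent_mean_def[symmetric] mean_step(1) diff_Suc_1)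
  have gap: "Sbar t - xbar t = - (\<gamma> * \<alpha> / (1 - \<alpha>)) *\<^sub>R U t" if "t \<in> {1..T}" for t
    using that alpha(2) by (cases t) (simp_all add: Sbar_def xbar_step heavy_ball_extrapolation_gap)
  have "(\<Sum>t=1..T. (norm (Sbar t - xbar t))\<^sup>2) = (\<gamma> * \<alpha> / (1 - \<alpha>))\<^sup>2 * (\<Sum>t=1..T. (norm (U t))\<^sup>2)"
    unfolding sum_distrib_left by (rule sum.cong) (simp_all add: gap power_mult_distrib power_divide)
  also have "\<dots> \<le> (\<gamma> * \<alpha> / (1 - \<alpha>))\<^sup>2 * ((\<Sum>t=1..T. (norm (ggbar t))\<^sup>2) / (1 - \<alpha>)\<^sup>2)"
    using alpha U_step by (intro mult_left_mono sum_power2_norm_heavy_ball_le) (simp_all add: U_def agent_mean_def)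
  also have "\<dots> = \<gamma>\<^sup>2 * \<alpha>\<^sup>2 / (1 - \<alpha>)^4 * (\<Sum>t=1..T. (norm (ggbar t))\<^sup>2)"
    by (simp add: power_divide power_mult_distrib flip: power_add)
  finally show ?thesis .
qed

end
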